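(* Consider the Histogram Partitioning algorithm (described in the context) run on $N$ distinct keys distributed over $p$ processors. If at the start of the $j$-th round exactly $k$ splitters are unachieved, then the sampled set satisfies $|\gamma_j| \le \frac{3kN}{p}$.
   Context: Setting: $N$ distinct keys from a totally ordered set (only comparisons are used) are distributed across $p$ processors, $N/p$ keys per processor. $R(x)$ denotes the global rank of key $x$. For $\ell\in\{1,\dots,p-1\}$, the target range of splitter $\ell$ is the rank range $[\frac{N\ell}{p},\frac{N\ell}{p}+\frac{N}{p}]$; splitter $\ell$ is achieved in a round if some key whose rank lies in this range is sampled in that round (and it stays achieved afterwards). Histogram Partitioning proceeds in rounds $j=1,2,\dots$. In round $j$ there is a set $\gamma_j$ of keys from which samples are drawn ($\gamma_1$ is the whole input): each key of $\gamma_j$ is sampled independently with some probability $s_j$, the global ranks (histogram) of all sampled keys are computed and made known to all processors. For every splitter $\ell$ not yet achieved, the algorithm maintains bounds: $L_j(\ell)$ is the largest key sampled before round $j$ whose rank is below $\frac{N\ell}{p}$ (or the smallest key if none), and $U_j(\ell)$ is the smallest key sampled before round $j$ whose rank is above $\frac{N\ell}{p}+\frac{N}{p}$ (or the largest key if none). Then $\gamma_j$ is the union, over all splitters $\ell$ unachieved before round $j$, of the sets of keys lying between $L_j(\ell)$ and $U_j(\ell)$. *)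

theory Defs
  imports Complex_Main
begin

text \<open>Keys are the elements of a finite set K of a linearly ordered type (hence distinct).
  Global ranks are 0-based: the rank of x is the number of keys smaller than x.\<close>

definition rank :: "'a::linorder set \<Rightarrow> 'a \<Rightarrow> nat" where
  "rank K x = card {y \<in> K. y < x}"

definition tlo :: "'a::linorder set \<Rightarrow> nat \<Rightarrow> nat \<Rightarrow> real" where
  "tlo K p l = real (card K) * real l / real p"

definition thi :: "'a::linorder set \<Rightarrow> nat \<Rightarrow> nat \<Rightarrow> real" where
  "thi K p l = tlo K p l + real (card K) / real p"

text \<open>smp i is the set of keys sampled in round i (rounds are numbered 1, 2, ...).
  The keys sampled before round j:\<close>

definition sampled_before :: "(nat \<Rightarrow> 'a set) \<Rightarrow> nat \<Rightarrow> 'a set" where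
  "sampled_before smp j = (\<Union>i\<in>{1..<j}. smp i)"

definition achieved :: "'a::linorder set \<Rightarrow> nat \<Rightarrow> 'a set \<Rightarrow> nat \<Rightarrow> bool" where
  "achieved K p S l \<longleftrightarrow>
     (\<exists>x\<in>S. tlo K p l \<le> real (rank K x) \<and> real (rank K x) \<le> thi K p l)"

definition unachieved_at :: "'a::linorder set \<Rightarrow> nat \<Rightarrow> (nat \<Rightarrow> 'a set) \<Rightarrow> nat \<Rightarrow> nat set" where
  "unachieved_at K p smp j =
     {l \<in> {1..p-1}. \<not> achieved K p (sampled_before smp j) l}"

definition Lb :: "'a::linorder set \<Rightarrow> nat \<Rightarrow> 'a set \<Rightarrow> nat \<Rightarrow> 'a" where
  "Lb K p S l =
     (if \<exists>y\<in>S. real (rank K y) < tlo K p l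
      then Max {y \<in> S. real (rank K y) < tlo K p l} else Min K)"

definition Ub :: "'a::linorder set \<Rightarrow> nat \<Rightarrow> 'a set \<Rightarrow> nat \<Rightarrow> 'a" where
  "Ub K p S l =
     (if \<exists>y\<in>S. real (rank K y) > thi K p l
      then Min {y \<in> S. real (rank K y) > thi K p l} else Max K)"

text \<open>Keys lying between L(l) and U(l): strictly between a sampled bound (which has
  already been sampled), inclusive at a fallback bound (smallest / largest key), so that
  gamma_1 is the whole input.\<close>

definition between :: "'a::linorder set \<Rightarrow> nat \<Rightarrow> 'a set \<Rightarrow> nat \<Rightarrow> 'a \<Rightarrow> bool" where
  "between K p S l x \<longleftrightarrow>
     (if \<exists>y\<in>S. real (rank K y) < tlo K p l then Lb K p S l < x else Lb K p S l \<le> x) \<and>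
     (if \<exists>y\<in>S. real (rank K y) > thi K p l then x < Ub K p S l else x \<le> Ub K p S l)"

definition gamma :: "'a::linorder set \<Rightarrow> nat \<Rightarrow> (nat \<Rightarrow> 'a set) \<Rightarrow> nat \<Rightarrow> 'a set" where
  "gamma K p smp j =
     {x \<in> K. \<exists>l\<in>unachieved_at K p smp j. between K p (sampled_before smp j) l x}"

end

theory Submission
  imports Defs
begin

text \<open>Write \<open>N = p m\<close> and cut the keys by rank into \<open>p\<close> blocks of \<open>m\<close> consecutive keys, block
  \<open>c\<close> holding the ranks in \<open>[c m, c m + m)\<close>. If \<open>x \<in> \<gamma>\<^sub>j\<close> lies between the bounds of an
  unachieved splitter \<open>l\<close> but in a block \<open>c \<ge> l + 2\<close>, then splitter \<open>c - 1\<close> is unachieved as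
  well: a sample with rank in \<open>[(c-1) m, c m]\<close> would lie above the target range of \<open>l\<close>,
  hence above \<open>U(l) > x\<close>, contradicting \<open>rank x \<ge> c m\<close>; symmetrically for \<open>c \<le> l - 2\<close>.
  So \<open>\<gamma>\<^sub>j\<close> is covered by the blocks \<open>l - 1, l, l + 1\<close> of the \<open>k\<close> unachieved splitters \<open>l\<close>.\<close>

lemma rank_less_rank:
  assumes "finite K" "x \<in> K" "x < y"
  shows "rank K x < rank K y"
  unfolding rank_def
proof (rule psubset_card_mono)
  show "finite {z \<in> K. z < y}" using assms(1) by simp
  show "{z \<in> K. z < x} \<subset> {z \<in> K. z < y}" using assms by auto
qed

lemma inj_on_rank: "finite K \<Longrightarrow> inj_on (rank K) K"
  by (metis inj_onI linorder_neqE less_irrefl rank_less_rank)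

lemma rank_less_card:
  assumes "finite K" "x \<in> K"
  shows "rank K x < card K"
  unfolding rank_def by (rule psubset_card_mono) (use assms in auto)

lemma sampled_before_subset:
  assumes "\<forall>i\<in>{1..<j}. smp i \<subseteq> gamma K p smp i"
  shows "sampled_before smp j \<subseteq> K"
  using assms unfolding sampled_before_def gamma_def by blast

lemma between_less_sample_above:
  assumes "finite S" "between K p S l x" "y \<in> S" "thi K p l < real (rank K y)"
  shows "x < y"
proof -
  have sampled_above: "\<exists>y\<in>S. thi K p l < real (rank K y)" using assms(3,4) by blast
  have "x < Ub K p S l" using sampled_above assms(2) unfolding between_def by simp
  also have "Ub K p S l \<le> y" unfolding Ub_def using assms(1,3,4) by (auto intro: Min_le)
  finally show ?thesis .
qed

lemma sample_below_less_between:
  assumes "finite S" "between K p S l x" "y \<in> S" "real (rank K y) < tlo K p l"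
  shows "y < x"
proof -
  have sampled_below: "\<exists>y\<in>S. real (rank K y) < tlo K p l" using assms(3,4) by blast
  have "y \<le> Lb K p S l" unfolding Lb_def using assms(1,3,4) by (auto intro: Max_ge)
  also have "Lb K p S l < x" using sampled_below assms(2) unfolding between_def by simp
  finally show ?thesis .
qed

lemma tlo_eq_mult: "card K = p * m \<Longrightarrow> p > 0 \<Longrightarrow> tlo K p l = real (l * m)"
  unfolding tlo_def by simp

lemma thi_eq_mult: "card K = p * m \<Longrightarrow> p > 0 \<Longrightarrow> thi K p l = real (l * m + m)"
  unfolding thi_def tlo_def by simp

lemma achieved_iff_rank_range:
  assumes "card K = p * m" "p > 0"
  shows "achieved K p S l \<longleftrightarrow> (\<exists>y\<in>S. l * m \<le> rank K y \<and> rank K y \<le> l * m + m)"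
  unfolding achieved_def tlo_eq_mult[OF assms] thi_eq_mult[OF assms] by (simp only: of_nat_le_iff)

lemma not_achieved_pred_block:
  assumes "finite K" "S \<subseteq> K" "card K = p * m" "p > 0"
    and "\<not> achieved K p S l" "x \<in> K" "between K p S l x"
    and far: "l + 2 \<le> rank K x div m"
  shows "\<not> achieved K p S (rank K x div m - 1)"
proof
  define d where "d = rank K x div m - 1"
  have d: "rank K x div m = Suc d" "l + 1 \<le> d" using far unfolding d_def by simp_all
  assume "achieved K p S (rank K x div m - 1)"
  then obtain y where y: "y \<in> S" "d * m \<le> rank K y" "rank K y \<le> d * m + m"
    using achieved_iff_rank_range[OF assms(3,4)] d(1) by auto
  have "l * m + m \<le> d * m" using mult_le_mono1[OF d(2), of m] by simp
  \<comment> \<open>the ranges of \<open>l\<close> and \<open>l + 1\<close> share the rank \<open>l m + m\<close>; this is why \<open>far\<close> asks for a gap of 2\<close>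
  then have "l * m + m < rank K y"
    using y assms(5) achieved_iff_rank_range[OF assms(3,4)] by force
  then have "thi K p l < real (rank K y)"
    unfolding thi_eq_mult[OF assms(3,4)] by (simp only: of_nat_less_iff)
  then have "x < y"
    using between_less_sample_above[OF _ assms(7) y(1)] finite_subset[OF assms(2,1)] by blast
  then have "rank K x < rank K y" using rank_less_rank assms(1,6) by blast
  moreover have "d * m + m \<le> rank K x"
    using div_times_less_eq_dividend[of "rank K x" m] d(1) by simp
  ultimately show False using y(3) by linarith
qed

lemma not_achieved_succ_block:
  assumes "finite K" "S \<subseteq> K" "card K = p * m" "p > 0"
    and "\<not> achieved K p S l" "x \<in> K" "between K p S l x"
    and far: "rank K x div m + 2 \<le> l"
  shows "\<not> achieved K p S (rank K x div m + 1)"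
proof
  define c where "c = rank K x div m"
  assume "achieved K p S (rank K x div m + 1)"
  then obtain y where y: "y \<in> S" "(c + 1) * m \<le> rank K y" "rank K y \<le> (c + 1) * m + m"
    using achieved_iff_rank_range[OF assms(3,4)] unfolding c_def by blast
  have "(c + 1) * m + m \<le> l * m" using mult_le_mono1[OF far, of m] unfolding c_def by simp
  then have "rank K y < l * m"
    using y assms(5) achieved_iff_rank_range[OF assms(3,4)] by force
  then have "real (rank K y) < tlo K p l"
    unfolding tlo_eq_mult[OF assms(3,4)] by (simp only: of_nat_less_iff)
  then have "y < x"
    using sample_below_less_between[OF _ assms(7) y(1)] finite_subset[OF assms(2,1)] by blast
  then have "rank K y < rank K x" using rank_less_rank assms(1,2) y(1) by blast
  moreover have "m > 0" using assms(1,3,6) by (metis card_gt_0_iff emptyE mult_is_0 not_gr0)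
  then have "rank K x < c * m + m"
    using dividend_less_div_times[of m "rank K x"] unfolding c_def by simp
  ultimately show False using y(2) by simp
qed

lemma between_near_unachieved:
  assumes "finite K" "S \<subseteq> K" "card K = p * m" "p > 0"
    and "l \<in> {1..p-1}" "\<not> achieved K p S l" "x \<in> K" "between K p S l x"
  shows "\<exists>l'\<in>{1..p-1}. \<not> achieved K p S l' \<and> rank K x div m \<le> l' + 1 \<and> l' \<le> rank K x div m + 1"
proof -
  define c where "c = rank K x div m"
  have "c < p" using rank_less_card[OF assms(1,7)] assms(3) unfolding c_def
    by (simp add: less_mult_imp_div_less mult.commute)
  consider "l + 2 \<le> c" | "c + 2 \<le> l" | "c \<le> l + 1" "l \<le> c + 1" by linarith
  then show ?thesis
  proof cases
    case 1
    then have "\<not> achieved K p S (c - 1)"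
      using not_achieved_pred_block[OF assms(1-4,6-8)] unfolding c_def by blast
    moreover have "c - 1 \<in> {1..p-1}" using 1 \<open>c < p\<close> by auto
    ultimately show ?thesis unfolding c_def[symmetric] by (intro bexI[of _ "c - 1"]) auto
  next
    case 2
    then have "\<not> achieved K p S (c + 1)"
      using not_achieved_succ_block[OF assms(1-4,6-8)] unfolding c_def by blast
    moreover have "c + 1 \<in> {1..p-1}" using 2 assms(5) by auto
    ultimately show ?thesis unfolding c_def[symmetric] by (intro bexI[of _ "c + 1"]) auto
  next
    case 3
    then show ?thesis using assms(5,6) unfolding c_def by blast
  qed
qed

definition rank_block :: "'a::linorder set \<Rightarrow> nat \<Rightarrow> nat \<Rightarrow> 'a set" where
  "rank_block K m c = {x \<in> K. rank K x div m = c}"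

lemma card_rank_block_le:
  assumes "finite K" "m > 0"
  shows "card (rank_block K m c) \<le> m"
proof -
  have "r \<in> {c * m..<c * m + m}" if "r div m = c" for r
    using dividend_less_div_times[OF assms(2), of r] that by auto
  then have "rank K ` rank_block K m c \<subseteq> {c * m..<c * m + m}"
    unfolding rank_block_def by auto
  moreover have "inj_on (rank K) (rank_block K m c)"
    using inj_on_rank[OF assms(1)] by (rule inj_on_subset) (auto simp: rank_block_def)
  ultimately have "card (rank_block K m c) \<le> card {c * m..<c * m + m}"
    by (intro card_inj_on_le) auto
  then show ?thesis by simp
qed

lemma gamma_subset_rank_blocks:
  assumes "finite K" "sampled_before smp j \<subseteq> K" "card K = p * m" "p > 0"
  shows "gamma K p smp j \<subseteq>
    (\<Union>l\<in>unachieved_at K p smp j. rank_block K m (l - 1) \<union> rank_block K m l \<union> rank_block K m (l + 1))"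
proof
  fix x assume "x \<in> gamma K p smp j"
  then obtain l where "x \<in> K" "l \<in> unachieved_at K p smp j" "between K p (sampled_before smp j) l x"
    unfolding gamma_def by blast
  then obtain l' where l': "l' \<in> {1..p-1}" "\<not> achieved K p (sampled_before smp j) l'"
      "rank K x div m \<le> l' + 1" "l' \<le> rank K x div m + 1"
    using between_near_unachieved[OF assms] unfolding unachieved_at_def by blast
  then have "l' \<in> unachieved_at K p smp j" unfolding unachieved_at_def by blast
  moreover have "x \<in> rank_block K m (l' - 1) \<union> rank_block K m l' \<union> rank_block K m (l' + 1)"
    using l' \<open>x \<in> K\<close> unfolding rank_block_def by auto
  ultimately show "x \<in> (\<Union>l\<in>unachieved_at K p smp j.
      rank_block K m (l - 1) \<union> rank_block K m l \<union> rank_block K m (l + 1))" by blast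
qed

lemma card_gamma_le:
  assumes "finite K" "sampled_before smp j \<subseteq> K" "card K = p * m" "p > 0"
  shows "card (gamma K p smp j) \<le> 3 * m * card (unachieved_at K p smp j)"
proof (cases "m = 0")
  case True
  then have "gamma K p smp j = {}" using assms(1,3) unfolding gamma_def by simp
  then show ?thesis by simp
next
  case False
  define U where "U = unachieved_at K p smp j"
  define B where "B = rank_block K m"
  have "finite U" unfolding U_def unachieved_at_def by simp
  have "card (gamma K p smp j) \<le> card (\<Union>l\<in>U. B (l - 1) \<union> B l \<union> B (l + 1))"
    using gamma_subset_rank_blocks[OF assms] \<open>finite U\<close> assms(1)
    unfolding U_def B_def rank_block_def by (intro card_mono) auto
  also have "\<dots> \<le> (\<Sum>l\<in>U. card (B (l - 1) \<union> B l \<union> B (l + 1)))"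
    by (rule card_UN_le[OF \<open>finite U\<close>])
  also have "\<dots> \<le> (\<Sum>l\<in>U. 3 * m)"
  proof (rule sum_mono)
    fix l
    have "card (B (l - 1) \<union> B l \<union> B (l + 1)) \<le> card (B (l - 1)) + card (B l) + card (B (l + 1))"
      by (metis card_Un_le add_le_mono1 order_trans)
    moreover have block: "card (B c) \<le> m" for c
      using card_rank_block_le[OF assms(1)] False unfolding B_def by simp
    ultimately show "card (B (l - 1) \<union> B l \<union> B (l + 1)) \<le> 3 * m"
      using block[of "l - 1"] block[of l] block[of "l + 1"] by linarith
  qed
  finally show ?thesis unfolding U_def by (simp add: mult.commute)
qed

theorem lemma2p2:
  fixes K :: "'a::linorder set" and N p j k :: nat and smp :: "nat \<Rightarrow> 'a set"
  assumes "finite K" and "card K = N" and "p > 0" and "p dvd N"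
    and "j \<ge> 1"
    and "\<forall>i\<in>{1..<j}. smp i \<subseteq> gamma K p smp i"
    and "card (unachieved_at K p smp j) = k"
  shows "real (card (gamma K p smp j)) \<le> 3 * real k * real N / real p"
proof -
  obtain m where N: "N = p * m" using assms(4) by blast
  have "card K = p * m" using assms(2) N by simp
  from card_gamma_le[OF assms(1) sampled_before_subset[OF assms(6)] this assms(3)]
  have "card (gamma K p smp j) \<le> 3 * m * k" using assms(7) by simp
  then have "real (card (gamma K p smp j)) \<le> real (3 * m * k)" by (simp only: of_nat_le_iff)
  also have "\<dots> = 3 * real k * real N / real p" using N assms(3) by simp
  finally show ?thesis .
qed

end
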